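(* Let $\lambda,\mu\in\mathcal{A}_{k,n}$ and $\nu\in\mathcal{P}_k^+$, and let $\check\nu\in\mathcal{A}_{k,n}$ be the unique element of the orbit $\nu\hat S_k$ lying in $\mathcal{A}_{k,n}$. Then $$N^\lambda_{\mu\nu}=N^\lambda_{\mu\check\nu}\binom{m_n(\check\nu)}{m_0(\nu),m_n(\nu),m_{2n}(\nu),\dots}\prod_{i=1}^{n-1}\binom{m_i(\check\nu)}{m_i(\nu),m_{i+n}(\nu),m_{i+2n}(\nu),\dots}.$$
   Context: Fix $k,n\ge1$. $\mathcal{P}_k^+$ is the set of $\nu\in\mathbb{Z}^k$ with $\nu_1\ge\cdots\ge\nu_k\ge0$; each such $\nu$ is extended to $\nu:\mathbb{Z}\to\mathbb{Z}$ by $\nu_{i+k}=\nu_i-n$. $\mathcal{A}_{k,n}$ is the set of such functions with $n\ge\nu_1\ge\cdots\ge\nu_k>0$. $\hat S_k$ is the group of bijections of $\mathbb{Z}$ generated by $\tau(m)=m-1$ and $\sigma_i$ ($0\le i<k$; $\sigma_i(m)=m+1$ if $m\equiv i$, $m-1$ if $m\equiv i+1$, $m$ otherwise, mod $k$), acting by $(\nu\circ\hat w)_i=\nu_{\hat w(i)}$; $\mathcal{A}_{k,n}$ meets each orbit in exactly one point. $m_j(\nu)=\#\{i\in[k]:\nu_i=j\}$. For $\nu\in\mathbb{Z}^k$ and $w\in S_k$, $\nu\circ w=(\nu_{w(1)},\dots,\nu_{w(k)})$; $S_\nu$ is its stabiliser and $S^\nu$ the minimal length representatives of $S_\nu\backslash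 S_k$. For $\lambda,\mu\in\mathcal{A}_{k,n}$, $\nu\in\mathcal{P}_k^+$: $N^\lambda_{\mu\nu}=\#\{(w,w')\in S^\mu\times S^\nu:\mu\circ w+\nu\circ w'=(\lambda_1+n\alpha_1,\dots,\lambda_k+n\alpha_k)\text{ for some }\alpha\in\mathbb{Z}^k\text{ with }\sum\alpha_i=d\}$, where $d=(|\mu|+|\nu|-|\lambda|)/n$ and $|\cdot|$ is the sum of the $k$ entries (these are the coefficients of $h_\nu$ in the expansion of the cylindric complete symmetric function $h_{\lambda/d/\mu}$). *)

theory Defs
  imports "HOL-Combinatorics.Permutations"
begin

text \<open>Elements of Z^k are represented as functions nat => int, only the
  entries at indices 1..k being relevant (paper's indexing).\<close>

definition inP :: "nat \<Rightarrow> (nat \<Rightarrow> int) \<Rightarrow> bool" where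
  "inP k \<nu> \<longleftrightarrow> (\<forall>i j. 1 \<le> i \<and> i \<le> j \<and> j \<le> k \<longrightarrow> \<nu> j \<le> \<nu> i) \<and> (\<forall>i\<in>{1..k}. 0 \<le> \<nu> i)"

definition inA :: "nat \<Rightarrow> nat \<Rightarrow> (nat \<Rightarrow> int) \<Rightarrow> bool" where
  "inA k n \<nu> \<longleftrightarrow> (\<forall>i j. 1 \<le> i \<and> i \<le> j \<and> j \<le> k \<longrightarrow> \<nu> j \<le> \<nu> i)
       \<and> (\<forall>i\<in>{1..k}. 0 < \<nu> i \<and> \<nu> i \<le> int n)"

text \<open>Extension of nu to Z by nu_(i+k) = nu_i - n.\<close>
definition ext :: "nat \<Rightarrow> nat \<Rightarrow> (nat \<Rightarrow> int) \<Rightarrow> int \<Rightarrow> int" where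
  "ext k n \<nu> i = \<nu> (nat ((i - 1) mod int k + 1)) - int n * ((i - 1) div int k)"

definition tau :: "int \<Rightarrow> int" where "tau m = m - 1"
definition tau_inv :: "int \<Rightarrow> int" where "tau_inv m = m + 1"

definition sigma :: "nat \<Rightarrow> nat \<Rightarrow> int \<Rightarrow> int" where
  "sigma k i m = (if m mod int k = int i mod int k then m + 1
                  else if m mod int k = (int i + 1) mod int k then m - 1 else m)"

text \<open>Affine symmetric group: generated by tau and the sigma_i (0 <= i < k);
  the generating set below is closed under inverses.\<close>
inductive_set affS :: "nat \<Rightarrow> (int \<Rightarrow> int) set" for k :: nat where
  affS_id: "id \<in> affS k"
| affS_tau: "w \<in> affS k \<Longrightarrow> w \<circ> tau \<in> affS k"
| affS_tau_inv: "w \<in> affS k \<Longrightarrow> w \<circ> tau_inv \<in> affS k"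
| affS_sigma: "w \<in> affS k \<Longrightarrow> i < k \<Longrightarrow> w \<circ> sigma k i \<in> affS k"

definition affOrbit :: "nat \<Rightarrow> nat \<Rightarrow> (nat \<Rightarrow> int) \<Rightarrow> (int \<Rightarrow> int) set" where
  "affOrbit k n \<nu> = {ext k n \<nu> \<circ> w | w. w \<in> affS k}"

definition mcount :: "nat \<Rightarrow> int \<Rightarrow> (nat \<Rightarrow> int) \<Rightarrow> nat" where
  "mcount k j \<nu> = card {i \<in> {1..k}. \<nu> i = j}"

text \<open>Coxeter length of a permutation of [k] = number of inversions.\<close>
definition invs :: "nat \<Rightarrow> (nat \<Rightarrow> nat) \<Rightarrow> nat" where
  "invs k w = card {(i, j). i \<in> {1..k} \<and> j \<in> {1..k} \<and> i < j \<and> w j < w i}"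

text \<open>S^nu: minimal length representatives of the right cosets S_nu w,
  S_nu = stabiliser of nu under nu o w.\<close>
definition Smin :: "nat \<Rightarrow> (nat \<Rightarrow> int) \<Rightarrow> (nat \<Rightarrow> nat) set" where
  "Smin k \<nu> = {w. w permutes {1..k} \<and>
     (\<forall>u. u permutes {1..k} \<and> (\<forall>i\<in>{1..k}. \<nu> (u i) = \<nu> i) \<longrightarrow> invs k w \<le> invs k (u \<circ> w))}"

text \<open>N^lambda_{mu nu}; the condition sum alpha = d is written as
  n * sum alpha = |mu| + |nu| - |lambda|.\<close>
definition Ncoef :: "nat \<Rightarrow> nat \<Rightarrow> (nat \<Rightarrow> int) \<Rightarrow> (nat \<Rightarrow> int) \<Rightarrow> (nat \<Rightarrow> int) \<Rightarrow> nat" where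
  "Ncoef k n la \<mu> \<nu> = card {(w, w'). w \<in> Smin k \<mu> \<and> w' \<in> Smin k \<nu> \<and>
     (\<exists>\<alpha> :: nat \<Rightarrow> int. (\<forall>i\<in>{1..k}. \<mu> (w i) + \<nu> (w' i) = la i + int n * \<alpha> i)
        \<and> int n * (\<Sum>i\<in>{1..k}. \<alpha> i) = (\<Sum>i\<in>{1..k}. \<mu> i) + (\<Sum>i\<in>{1..k}. \<nu> i) - (\<Sum>i\<in>{1..k}. la i))}"

text \<open>Multinomial coefficient N choose (f 0, f 1, ...), f finitely supported
  with parts summing to N.\<close>
definition multinom :: "nat \<Rightarrow> (nat \<Rightarrow> nat) \<Rightarrow> nat" where
  "multinom N f = fact N div (\<Prod>j\<in>{j. f j \<noteq> 0}. fact (f j))"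

end

theory Submission
  imports Defs "HOL-Combinatorics.Multiset_Permutations"
begin

text \<open>A minimal coset representative \<open>w \<in> S\<^sup>\<nu>\<close> is determined by the rearrangement
  \<open>\<nu> \<circ> w\<close> of the entries of \<open>\<nu>\<close>, so \<open>N\<^sup>\<lambda>\<^sub>\<mu>\<^sub>\<nu>\<close> counts pairs \<open>(a, b)\<close> of
  rearrangements of the entries of \<open>\<mu>\<close> and \<open>\<nu>\<close> with \<open>a\<^sub>i + b\<^sub>i \<equiv> \<lambda>\<^sub>i (mod n)\<close>.
  The affine symmetric group permutes positions modulo \<open>k\<close> and shifts values by multiples
  of \<open>n\<close>, so the entries of the representative in \<open>\<A>\<^sub>k\<^sub>,\<^sub>n\<close> are the residues in
  \<open>{1..n}\<close> of the entries of \<open>\<nu>\<close>. Reducing \<open>b\<close> modulo \<open>n\<close> preserves the congruence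
  condition and maps the rearrangements of \<open>\<nu>\<close> onto those of its representative with
  fibres of equal size; counting all rearrangements on both sides by factorial quotients
  identifies that size with the product of multinomial coefficients.\<close>

section \<open>Minimal coset representatives and rearrangements\<close>

definition inversions :: "nat \<Rightarrow> (nat \<Rightarrow> nat) \<Rightarrow> (nat \<times> nat) set" where
  "inversions k w = {(i, j). i \<in> {1..k} \<and> j \<in> {1..k} \<and> i < j \<and> w j < w i}"

lemma invs_eq_card_inversions: "invs k w = card (inversions k w)"
  by (simp add: invs_def inversions_def)

lemma finite_inversions: "finite (inversions k w)"
  by (rule finite_subset[of _ "{1..k} \<times> {1..k}"]) (auto simp: inversions_def)

lemma invs_comp_transpose_less:
  assumes "1 \<le> i" "i < j" "j \<le> k" "w j < w i"
  shows "invs k (w \<circ> transpose i j) < invs k w"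
proof -
  define s where "s = transpose i j"
  have s: "\<And>c. s c = (if c = i then j else if c = j then i else c)"
    by (simp add: s_def transpose_def)
  \<comment> \<open>Sort every inversion of \<open>w \<circ> s\<close> back through \<open>s\<close>; this injects them into the
    inversions of \<open>w\<close> other than \<open>(i, j)\<close>.\<close>
  define \<phi> where "\<phi> = (\<lambda>(a::nat, b::nat). if s a < s b then (s a, s b) else (a, b))"
  have into: "\<phi> ` inversions k (w \<circ> s) \<subseteq> inversions k w - {(i, j)}"
  proof
    fix p assume "p \<in> \<phi> ` inversions k (w \<circ> s)"
    then obtain a b where ab: "(a, b) \<in> inversions k (w \<circ> s)" and p: "p = \<phi> (a, b)" by auto
    from ab have "a \<in> {1..k}" "b \<in> {1..k}" "a < b" "w (s b) < w (s a)"
      by (auto simp: inversions_def)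
    with assms show "p \<in> inversions k w - {(i, j)}"
      unfolding p \<phi>_def inversions_def s by (auto split: if_splits)
  qed
  have inj: "inj_on \<phi> (inversions k (w \<circ> s))"
  proof (rule inj_onI)
    fix p q assume p: "p \<in> inversions k (w \<circ> s)" and q: "q \<in> inversions k (w \<circ> s)"
      and e: "\<phi> p = \<phi> q"
    obtain a b c d where [simp]: "p = (a, b)" "q = (c, d)" by fastforce
    from p q have "a < b" "c < d" by (auto simp: inversions_def)
    with e show "p = q" unfolding \<phi>_def s by (auto split: if_splits)
  qed
  have "(i, j) \<in> inversions k w"
    using assms by (auto simp: inversions_def)
  then have "card (inversions k w - {(i, j)}) < card (inversions k w)"
    by (rule card_Diff1_less[OF finite_inversions])
  moreover have "card (inversions k (w \<circ> s)) \<le> card (inversions k w - {(i, j)})"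
    using card_mono[OF _ into] card_image[OF inj] finite_inversions by (metis finite_Diff)
  ultimately show ?thesis
    by (simp add: s_def invs_eq_card_inversions)
qed

definition increasing_on_levels :: "nat \<Rightarrow> (nat \<Rightarrow> int) \<Rightarrow> (nat \<Rightarrow> nat) \<Rightarrow> bool" where
  "increasing_on_levels k \<nu> w \<longleftrightarrow>
     (\<forall>i\<in>{1..k}. \<forall>j\<in>{1..k}. i < j \<and> \<nu> (w i) = \<nu> (w j) \<longrightarrow> w i < w j)"

lemma Smin_increasing_on_levels:
  assumes w: "w \<in> Smin k \<nu>"
  shows "increasing_on_levels k \<nu> w"
  unfolding increasing_on_levels_def
proof (intro ballI impI)
  fix i j assume ij: "i \<in> {1..k}" "j \<in> {1..k}" and eq: "i < j \<and> \<nu> (w i) = \<nu> (w j)"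
  have p: "w permutes {1..k}" using w by (simp add: Smin_def)
  show "w i < w j"
  proof (rule ccontr)
    assume "\<not> w i < w j"
    moreover have "w i \<noteq> w j"
      using permutes_inj[OF p] ij eq by (auto dest: injD)
    ultimately have lt: "w j < w i" by simp
    define u where "u = transpose (w i) (w j)"
    have "u permutes {1..k}"
      unfolding u_def using ij permutes_in_image[OF p] by (intro permutes_swap_id) auto
    moreover have "\<forall>y\<in>{1..k}. \<nu> (u y) = \<nu> y"
      using eq by (auto simp: u_def transpose_def)
    ultimately have "invs k w \<le> invs k (u \<circ> w)"
      using w by (auto simp: Smin_def)
    moreover have "u \<circ> w = w \<circ> transpose i j"
      using permutes_inj[OF p] by (auto simp: u_def transpose_def fun_eq_iff dest: injD)
    moreover have "invs k (w \<circ> transpose i j) < invs k w"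
      using ij eq lt by (intro invs_comp_transpose_less) auto
    ultimately show False by simp
  qed
qed

lemma eq_of_card_less_eq:
  fixes T :: "nat set"
  assumes "finite T" "a \<in> T" "b \<in> T" "card {y\<in>T. y < a} = card {y\<in>T. y < b}"
  shows "a = b"
proof -
  have card_less: "card {y\<in>T. y < a} < card {y\<in>T. y < b}" if "a \<in> T" "a < b" for a b
    using that assms(1) by (intro psubset_card_mono) auto
  show ?thesis
  proof (cases a b rule: linorder_cases)
    case less
    with card_less[of a b] assms show ?thesis by simp
  next
    case equal
    then show ?thesis .
  next
    case greater
    with card_less[of b a] assms show ?thesis by simp
  qed
qed

text \<open>A permutation increasing on the levels of \<open>\<nu>\<close> sends \<open>i\<close> to the element of its level
  whose rank there is the number of earlier positions on the same level.\<close>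

lemma card_level_below:
  assumes p: "w permutes {1..k}" and lv: "increasing_on_levels k \<nu> w" and i: "i \<in> {1..k}"
  shows "card {y\<in>{1..k}. \<nu> y = \<nu> (w i) \<and> y < w i} = card {j\<in>{1..k}. j < i \<and> \<nu> (w j) = \<nu> (w i)}"
proof -
  have image: "w ` {j\<in>{1..k}. j < i \<and> \<nu> (w j) = \<nu> (w i)} = {y\<in>{1..k}. \<nu> y = \<nu> (w i) \<and> y < w i}"
  proof (intro equalityI subsetI)
    fix y assume "y \<in> w ` {j\<in>{1..k}. j < i \<and> \<nu> (w j) = \<nu> (w i)}"
    then obtain j where j: "j \<in> {1..k}" "j < i" "\<nu> (w j) = \<nu> (w i)" "y = w j" by auto
    have "w j < w i" using lv i j(1-3) unfolding increasing_on_levels_def by blast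
    moreover have "w j \<in> {1..k}" using permutes_in_image[OF p] j(1) by blast
    ultimately show "y \<in> {y\<in>{1..k}. \<nu> y = \<nu> (w i) \<and> y < w i}"
      using j by simp
  next
    fix y assume y: "y \<in> {y\<in>{1..k}. \<nu> y = \<nu> (w i) \<and> y < w i}"
    have "y \<in> w ` {1..k}" using y permutes_image[OF p] by simp
    then obtain j where j: "j \<in> {1..k}" "y = w j" by blast
    have "\<not> i < j"
    proof
      assume "i < j"
      moreover have "\<nu> (w i) = \<nu> (w j)" using y j by simp
      ultimately have "w i < w j" using lv i j(1) unfolding increasing_on_levels_def by blast
      then show False using y j by simp
    qed
    moreover have "j \<noteq> i" using y j by auto
    ultimately show "y \<in> w ` {j\<in>{1..k}. j < i \<and> \<nu> (w j) = \<nu> (w i)}"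
      using j y by auto
  qed
  have "inj_on w {j\<in>{1..k}. j < i \<and> \<nu> (w j) = \<nu> (w i)}"
    using permutes_inj[OF p] by (rule inj_on_subset) simp
  from card_image[OF this] show ?thesis
    unfolding image .
qed

lemma increasing_on_levels_unique:
  assumes p: "w permutes {1..k}" and p': "w' permutes {1..k}"
    and lv: "increasing_on_levels k \<nu> w" and lv': "increasing_on_levels k \<nu> w'"
    and eq: "\<forall>i\<in>{1..k}. \<nu> (w i) = \<nu> (w' i)"
  shows "w = w'"
proof
  fix i show "w i = w' i"
  proof (cases "i \<in> {1..k}")
    case False then show ?thesis using p p' by (simp add: permutes_not_in)
  next
    case True
    have eq_at: "\<nu> (w j) = \<nu> (w' j)" if "j \<in> {1..k}" for j
      using eq that by blast
    define T where "T = {y\<in>{1..k}. \<nu> y = \<nu> (w' i)}"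
    have "finite T" by (simp add: T_def)
    moreover have "w i \<in> T" "w' i \<in> T"
      using True eq_at[OF True] permutes_in_image[OF p] permutes_in_image[OF p'] by (auto simp: T_def)
    moreover have "card {y\<in>T. y < w i} = card {y\<in>T. y < w' i}"
      using card_level_below[OF p lv True] card_level_below[OF p' lv' True]
      unfolding T_def eq_at[OF True] by (simp add: conj_assoc eq_at cong: conj_cong)
    ultimately show ?thesis
      by (rule eq_of_card_less_eq)
  qed
qed

definition entries :: "nat \<Rightarrow> (nat \<Rightarrow> int) \<Rightarrow> int multiset" where
  "entries k \<nu> = image_mset \<nu> (mset_set {1..k})"

definition word :: "nat \<Rightarrow> (nat \<Rightarrow> int) \<Rightarrow> (nat \<Rightarrow> nat) \<Rightarrow> int list" where
  "word k \<nu> w = map (\<lambda>i. \<nu> (w i)) [1..<Suc k]"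

lemma mset_map_upt_Suc: "mset (map f [1..<Suc k]) = image_mset f (mset_set {1..k})"
  by (simp only: mset_map mset_upt atLeastLessThanSuc_atLeastAtMost)

lemma length_word [simp]: "length (word k \<nu> w) = k"
  by (simp add: word_def)

lemma nth_word: "i < k \<Longrightarrow> word k \<nu> w ! i = \<nu> (w (Suc i))"
  by (simp add: word_def nth_append del: upt_Suc)

lemma word_eq_iff: "word k \<nu> w = word k \<nu> w' \<longleftrightarrow> (\<forall>i\<in>{1..k}. \<nu> (w i) = \<nu> (w' i))"
  by (auto simp: word_def map_eq_conv atLeastLessThanSuc_atLeastAtMost simp del: upt_Suc)

lemma word_in_permutations_of_multiset:
  assumes p: "w permutes {1..k}"
  shows "word k \<nu> w \<in> permutations_of_multiset (entries k \<nu>)"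
proof (rule permutations_of_multisetI)
  have "mset (word k \<nu> w) = image_mset \<nu> (image_mset w (mset_set {1..k}))"
    unfolding word_def mset_map_upt_Suc by (simp add: image_mset.compositionality o_def)
  also have "image_mset w (mset_set {1..k}) = mset_set {1..k}"
    using image_mset_mset_set[OF inj_on_subset[OF permutes_inj[OF p] subset_UNIV]] permutes_image[OF p]
    by simp
  finally show "mset (word k \<nu> w) = entries k \<nu>"
    by (simp add: entries_def)
qed

lemma permutes_shift_down:
  assumes "p permutes {..<k}"
  shows "(\<lambda>j. if j \<in> {1..k} then Suc (p (j - 1)) else j) permutes {1..k}"
proof (rule bij_imp_permutes)
  have "bij_betw (Suc \<circ> p \<circ> (\<lambda>j. j - 1)) {1..k} {1..k}"
  proof (intro bij_betw_trans)
    show "bij_betw (\<lambda>j. j - 1) {1..k} {..<k}"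
      by (rule bij_betw_byWitness[where f'=Suc]) auto
    show "bij_betw p {..<k} {..<k}"
      using assms by (rule permutes_imp_bij)
    show "bij_betw Suc {..<k} {1..k}"
      by (rule bij_betw_byWitness[where f'="\<lambda>j. j - 1"]) auto
  qed
  then show "bij_betw (\<lambda>j. if j \<in> {1..k} then Suc (p (j - 1)) else j) {1..k} {1..k}"
    by (rule bij_betw_cong[THEN iffD1, rotated]) auto
qed auto

lemma word_surj:
  assumes bs: "bs \<in> permutations_of_multiset (entries k \<nu>)"
  obtains w where "w permutes {1..k}" "word k \<nu> w = bs"
proof -
  have "mset (map \<nu> [1..<Suc k]) = mset bs"
    using permutations_of_multisetD[OF bs] unfolding entries_def mset_map_upt_Suc by simp
  then obtain p where p: "p permutes {..<length (map \<nu> [1..<Suc k])}"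
    and pl: "permute_list p (map \<nu> [1..<Suc k]) = bs"
    by (rule mset_eq_permutation[OF sym])
  have pk: "p permutes {..<k}" using p by (simp del: upt_Suc)
  define w where "w = (\<lambda>j. if j \<in> {1..k} then Suc (p (j - 1)) else j)"
  have "word k \<nu> w = bs"
  proof (rule nth_equalityI)
    show "length (word k \<nu> w) = length bs" using pl by (simp flip: pl del: upt_Suc)
    fix i assume "i < length (word k \<nu> w)"
    then have i: "i < k" by simp
    have "bs ! i = map \<nu> [1..<Suc k] ! p i"
      using permute_list_nth[OF p, of i] i pl by (simp del: upt_Suc)
    also have "\<dots> = \<nu> (Suc (p i))"
      using permutes_in_image[OF pk, of i] i by (simp del: upt_Suc)
    finally show "word k \<nu> w ! i = bs ! i"
      using i by (simp add: nth_word w_def)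
  qed
  then show ?thesis
    using that permutes_shift_down[OF pk] unfolding w_def by blast
qed

lemma Smin_if_invs_minimal:
  assumes w: "w permutes {1..k}"
    and min: "\<And>z. z permutes {1..k} \<Longrightarrow> word k \<nu> z = word k \<nu> w \<Longrightarrow> invs k w \<le> invs k z"
  shows "w \<in> Smin k \<nu>"
  unfolding Smin_def
proof (intro CollectI conjI allI impI)
  show "w permutes {1..k}" by (rule w)
  fix u assume u: "u permutes {1..k} \<and> (\<forall>i\<in>{1..k}. \<nu> (u i) = \<nu> i)"
  have "\<forall>i\<in>{1..k}. \<nu> (u (w i)) = \<nu> (w i)"
    using u permutes_in_image[OF w] by auto
  then have "word k \<nu> (u \<circ> w) = word k \<nu> w"
    by (simp add: word_eq_iff)
  then show "invs k w \<le> invs k (u \<circ> w)"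
    using u w by (intro min) (simp_all add: permutes_compose)
qed

lemma bij_betw_word_Smin:
  "bij_betw (word k \<nu>) (Smin k \<nu>) (permutations_of_multiset (entries k \<nu>))"
proof (rule bij_betw_imageI)
  show "inj_on (word k \<nu>) (Smin k \<nu>)"
  proof (rule inj_onI)
    fix w w' assume "w \<in> Smin k \<nu>" "w' \<in> Smin k \<nu>" "word k \<nu> w = word k \<nu> w'"
    then show "w = w'"
      by (intro increasing_on_levels_unique[of w k w' \<nu>])
        (auto simp: Smin_def Smin_increasing_on_levels word_eq_iff)
  qed
  show "word k \<nu> ` Smin k \<nu> = permutations_of_multiset (entries k \<nu>)"
  proof (intro equalityI subsetI)
    fix bs assume "bs \<in> word k \<nu> ` Smin k \<nu>"
    then show "bs \<in> permutations_of_multiset (entries k \<nu>)"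
      using word_in_permutations_of_multiset by (auto simp: Smin_def)
  next
    fix bs assume bs: "bs \<in> permutations_of_multiset (entries k \<nu>)"
    define P where "P = (\<lambda>w. w permutes {1..k} \<and> word k \<nu> w = bs)"
    obtain w0 where "P w0" using word_surj[OF bs] by (auto simp: P_def)
    then obtain w where w: "P w" and min: "\<And>z. P z \<Longrightarrow> invs k w \<le> invs k z"
      using ex_has_least_nat[of P w0 "invs k"] by blast
    have "w \<in> Smin k \<nu>"
      using w min by (intro Smin_if_invs_minimal) (auto simp: P_def)
    then show "bs \<in> word k \<nu> ` Smin k \<nu>"
      using w by (auto simp: P_def)
  qed
qed

section \<open>The coefficients as counts of congruent rearrangements\<close>

lemma card_pairs_bij_betw:
  assumes f: "bij_betw f A A'" and g: "bij_betw g B B'"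
  shows "card {(a, b). a \<in> A \<and> b \<in> B \<and> P (f a) (g b)} = card {(x, y). x \<in> A' \<and> y \<in> B' \<and> P x y}"
proof -
  let ?S = "{(a, b). a \<in> A \<and> b \<in> B \<and> P (f a) (g b)}"
  have inj: "inj_on (map_prod f g) ?S"
    using map_prod_inj_on[OF bij_betw_imp_inj_on[OF f] bij_betw_imp_inj_on[OF g]]
    by (rule inj_on_subset) auto
  have image: "map_prod f g ` ?S = {(x, y). x \<in> A' \<and> y \<in> B' \<and> P x y}"
  proof (intro equalityI subsetI)
    fix z assume "z \<in> map_prod f g ` ?S"
    then show "z \<in> {(x, y). x \<in> A' \<and> y \<in> B' \<and> P x y}"
      using bij_betw_apply[OF f] bij_betw_apply[OF g] by auto
  next
    fix z assume z: "z \<in> {(x, y). x \<in> A' \<and> y \<in> B' \<and> P x y}"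
    then obtain x y where xy: "z = (x, y)" "x \<in> A'" "y \<in> B'" "P x y" by blast
    obtain a where "a \<in> A" "f a = x" using xy(2) bij_betw_imp_surj_on[OF f] by blast
    moreover obtain b where "b \<in> B" "g b = y" using xy(3) bij_betw_imp_surj_on[OF g] by blast
    ultimately show "z \<in> map_prod f g ` ?S"
      using xy by (auto intro!: image_eqI[of _ _ "(a, b)"])
  qed
  show ?thesis
    using card_image[OF inj] unfolding image by (rule sym)
qed

lemma card_pairs_eq_sum:
  assumes "finite X" "finite Y"
  shows "card {(a, b). a \<in> X \<and> b \<in> Y \<and> P a b} = (\<Sum>a\<in>X. card {b \<in> Y. P a b})"
proof -
  have "{(a, b). a \<in> X \<and> b \<in> Y \<and> P a b} = Sigma X (\<lambda>a. {b \<in> Y. P a b})"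
    by auto
  then show ?thesis
    using assms by (simp add: card_SigmaI)
qed

text \<open>When \<open>n\<close> divides each \<open>\<mu> (w i) + \<nu> (w' i) - la i\<close>, the quotients are the only
  possible \<open>\<alpha>\<close>, and their sum is \<open>d\<close> automatically because \<open>w\<close> and \<open>w'\<close> permute \<open>{1..k}\<close>.\<close>

lemma Ncoef_condition_iff_dvd:
  assumes w: "w permutes {1..k}" and w': "w' permutes {1..k}"
  shows "(\<exists>\<alpha> :: nat \<Rightarrow> int. (\<forall>i\<in>{1..k}. \<mu> (w i) + \<nu> (w' i) = la i + int n * \<alpha> i)
        \<and> int n * (\<Sum>i\<in>{1..k}. \<alpha> i) = (\<Sum>i\<in>{1..k}. \<mu> i) + (\<Sum>i\<in>{1..k}. \<nu> i) - (\<Sum>i\<in>{1..k}. la i))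
     \<longleftrightarrow> (\<forall>i\<in>{1..k}. int n dvd \<mu> (w i) + \<nu> (w' i) - la i)"
    (is "?shift \<longleftrightarrow> ?dvd")
proof
  assume ?shift then show ?dvd by (auto simp: algebra_simps)
next
  assume dvd: ?dvd
  define \<alpha> where "\<alpha> = (\<lambda>i. (\<mu> (w i) + \<nu> (w' i) - la i) div int n)"
  have shift: "\<mu> (w i) + \<nu> (w' i) = la i + int n * \<alpha> i" if "i \<in> {1..k}" for i
    using dvd that by (simp add: \<alpha>_def)
  have "int n * (\<Sum>i\<in>{1..k}. \<alpha> i) = (\<Sum>i\<in>{1..k}. \<mu> (w i) + \<nu> (w' i) - la i)"
    by (simp add: sum_distrib_left shift)
  also have "\<dots> = (\<Sum>i\<in>{1..k}. \<mu> (w i)) + (\<Sum>i\<in>{1..k}. \<nu> (w' i)) - (\<Sum>i\<in>{1..k}. la i)"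
    by (simp add: sum.distrib sum_subtractf)
  also have "\<dots> = (\<Sum>i\<in>{1..k}. \<mu> i) + (\<Sum>i\<in>{1..k}. \<nu> i) - (\<Sum>i\<in>{1..k}. la i)"
    using sum.permute[OF w, of \<mu>] sum.permute[OF w', of \<nu>] by (simp add: o_def)
  finally show ?shift
    using shift by blast
qed

definition congruent_sum :: "nat \<Rightarrow> nat \<Rightarrow> (nat \<Rightarrow> int) \<Rightarrow> int list \<Rightarrow> int list \<Rightarrow> bool" where
  "congruent_sum k n la as bs \<longleftrightarrow> (\<forall>i<k. int n dvd as ! i + bs ! i - la (Suc i))"

lemma ball_atLeast1_atMost_iff: "(\<forall>i\<in>{1..k}. P i) \<longleftrightarrow> (\<forall>i<k. P (Suc i))"
proof
  assume "\<forall>i<k. P (Suc i)"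
  moreover have "i = Suc (i - 1) \<and> i - 1 < k" if "i \<in> {1..k}" for i
    using that by auto
  ultimately show "\<forall>i\<in>{1..k}. P i"
    by (metis (no_types, lifting))
qed simp

lemma congruent_sum_word_iff:
  "congruent_sum k n la (word k \<mu> w) (word k \<nu> w') \<longleftrightarrow> (\<forall>i\<in>{1..k}. int n dvd \<mu> (w i) + \<nu> (w' i) - la i)"
  unfolding congruent_sum_def ball_atLeast1_atMost_iff by (simp add: nth_word)

lemma Ncoef_eq_card_congruent_pairs:
  "Ncoef k n la \<mu> \<nu> = card {(a, b). a \<in> permutations_of_multiset (entries k \<mu>)
     \<and> b \<in> permutations_of_multiset (entries k \<nu>) \<and> congruent_sum k n la a b}"
proof -
  have "Ncoef k n la \<mu> \<nu> = card {(w, w'). w \<in> Smin k \<mu> \<and> w' \<in> Smin k \<nu> \<and>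
      congruent_sum k n la (word k \<mu> w) (word k \<nu> w')}"
    unfolding Ncoef_def
  proof (rule arg_cong[where f=card], rule Collect_cong, clarify)
    fix w w'
    show "(w \<in> Smin k \<mu> \<and> w' \<in> Smin k \<nu> \<and>
        (\<exists>\<alpha> :: nat \<Rightarrow> int. (\<forall>i\<in>{1..k}. \<mu> (w i) + \<nu> (w' i) = la i + int n * \<alpha> i)
          \<and> int n * (\<Sum>i\<in>{1..k}. \<alpha> i) = (\<Sum>i\<in>{1..k}. \<mu> i) + (\<Sum>i\<in>{1..k}. \<nu> i) - (\<Sum>i\<in>{1..k}. la i)))
      \<longleftrightarrow> (w \<in> Smin k \<mu> \<and> w' \<in> Smin k \<nu> \<and> congruent_sum k n la (word k \<mu> w) (word k \<nu> w'))"
      using Ncoef_condition_iff_dvd[of w k w' \<mu> \<nu> la n]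
      by (auto simp: Smin_def congruent_sum_word_iff)
  qed
  also have "\<dots> = card {(a, b). a \<in> permutations_of_multiset (entries k \<mu>)
      \<and> b \<in> permutations_of_multiset (entries k \<nu>) \<and> congruent_sum k n la a b}"
    by (rule card_pairs_bij_betw[OF bij_betw_word_Smin bij_betw_word_Smin])
  finally show ?thesis .
qed

section \<open>Fibres of a map on rearrangements\<close>

definition map_fibre :: "('a \<Rightarrow> 'b) \<Rightarrow> 'a multiset \<Rightarrow> 'b list \<Rightarrow> 'a list set" where
  "map_fibre f A c = {b \<in> permutations_of_multiset A. map f b = c}"

lemma finite_map_fibre: "finite (map_fibre f A c)"
  by (simp add: map_fibre_def)

lemma permute_list_inv_permute_list:
  assumes "p permutes {..<length xs}"
  shows "permute_list (inv p) (permute_list p xs) = xs"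
  using permute_list_compose[OF permutes_inv[OF assms], of p] permutes_inv_o(1)[OF assms]
  by simp

text \<open>Any two rearrangements \<open>c, c'\<close> of the image multiset differ by a reindexing, which
  maps the fibre over \<open>c\<close> injectively into the fibre over \<open>c'\<close>.\<close>

lemma card_map_fibre_le:
  assumes c: "c \<in> permutations_of_multiset (image_mset f A)"
      and c': "c' \<in> permutations_of_multiset (image_mset f A)"
  shows "card (map_fibre f A c) \<le> card (map_fibre f A c')"
proof -
  have "mset c' = mset c" using c c' by (simp add: permutations_of_multisetD)
  then obtain p where p: "p permutes {..<length c}" and pc: "permute_list p c = c'"
    by (rule mset_eq_permutation)
  have len: "length b = length c" if "b \<in> map_fibre f A c" for b
    using that by (auto simp: map_fibre_def)
  have "inj_on (permute_list p) (map_fibre f A c)"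
    by (rule inj_on_inverseI[where g="permute_list (inv p)"])
      (simp add: permute_list_inv_permute_list len p)
  moreover have "permute_list p ` map_fibre f A c \<subseteq> map_fibre f A c'"
  proof
    fix z assume "z \<in> permute_list p ` map_fibre f A c"
    then obtain b where b: "b \<in> map_fibre f A c" "z = permute_list p b" by auto
    then have pb: "p permutes {..<length b}" using p len by simp
    have "mset z = mset b" using b(2) pb by simp
    moreover have "map f z = c'"
      using b pc by (simp add: permute_list_map[OF pb, symmetric] map_fibre_def)
    ultimately show "z \<in> map_fibre f A c'"
      using b(1) by (simp add: map_fibre_def permutations_of_multiset_def)
  qed
  ultimately show ?thesis
    by (intro card_inj_on_le finite_map_fibre)
qed

lemma card_map_fibre_eq:
  assumes "c \<in> permutations_of_multiset (image_mset f A)"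
      and "c' \<in> permutations_of_multiset (image_mset f A)"
  shows "card (map_fibre f A c) = card (map_fibre f A c')"
  using card_map_fibre_le[OF assms] card_map_fibre_le[OF assms(2,1)] by (rule antisym)

lemma card_filter_permutations_of_multiset_through_map:
  assumes c0: "c0 \<in> permutations_of_multiset (image_mset f A)"
    and Q: "\<And>b. b \<in> permutations_of_multiset A \<Longrightarrow> Q b \<longleftrightarrow> Q' (map f b)"
  shows "card {b \<in> permutations_of_multiset A. Q b} =
         card {c \<in> permutations_of_multiset (image_mset f A). Q' c} * card (map_fibre f A c0)"
proof -
  let ?C = "{c \<in> permutations_of_multiset (image_mset f A). Q' c}"
  have "{b \<in> permutations_of_multiset A. Q b} = (\<Union>c\<in>?C. map_fibre f A c)"
    using Q by (auto simp: map_fibre_def permutations_of_multiset_def)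
  also have "card \<dots> = (\<Sum>c\<in>?C. card (map_fibre f A c))"
    by (rule card_UN_disjoint) (auto simp: finite_map_fibre map_fibre_def)
  also have "\<dots> = (\<Sum>c\<in>?C. card (map_fibre f A c0))"
    using card_map_fibre_eq[OF _ c0] by (intro sum.cong) auto
  finally show ?thesis by simp
qed

lemma card_map_fibre_mul_prod_fact:
  assumes c0: "c0 \<in> permutations_of_multiset (image_mset f A)"
  shows "card (map_fibre f A c0) * (\<Prod>x\<in>set_mset A. fact (count A x)) =
    (\<Prod>y\<in>set_mset (image_mset f A). fact (count (image_mset f A) y))"
proof -
  let ?B = "image_mset f A"
  have "card (permutations_of_multiset A) = card (permutations_of_multiset ?B) * card (map_fibre f A c0)"
    using card_filter_permutations_of_multiset_through_map[OF c0, of "\<lambda>_. True" "\<lambda>_. True"] by simp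
  then have "card (permutations_of_multiset ?B) * (card (map_fibre f A c0) * (\<Prod>x\<in>set_mset A. fact (count A x)))
      = card (permutations_of_multiset ?B) * (\<Prod>y\<in>set_mset ?B. fact (count ?B y))"
    using card_permutations_of_multiset_aux[of A] card_permutations_of_multiset_aux[of ?B]
    by (simp add: mult.assoc)
  moreover have "card (permutations_of_multiset ?B) > 0"
    using c0 by (auto simp: card_gt_0_iff)
  ultimately show ?thesis
    by simp
qed

section \<open>Residues modulo n and multinomial coefficients\<close>

definition residue :: "nat \<Rightarrow> int \<Rightarrow> int" where
  "residue n x = (x - 1) mod int n + 1"

lemma residue_in_range:
  assumes "n \<ge> 1"
  shows "residue n x \<in> {1..int n}"
proof -
  have "0 \<le> (x - 1) mod int n" "(x - 1) mod int n < int n"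
    using assms by simp_all
  then show ?thesis
    by (simp add: residue_def)
qed

lemma residue_eq_iff_dvd:
  assumes "n \<ge> 1" "1 \<le> v" "v \<le> int n"
  shows "residue n x = v \<longleftrightarrow> int n dvd x - v"
proof -
  have "(v - 1) mod int n = v - 1"
    using assms by (intro mod_pos_pos_trivial) auto
  then have "residue n x = v \<longleftrightarrow> (x - 1) mod int n = (v - 1) mod int n"
    unfolding residue_def by linarith
  also have "\<dots> \<longleftrightarrow> int n dvd x - v"
    by (simp add: mod_eq_dvd_iff)
  finally show ?thesis .
qed

lemma dvd_residue_diff: "int n dvd residue n x - x"
proof -
  have "residue n x - x = - ((x - 1) - (x - 1) mod int n)"
    by (simp add: residue_def)
  then show ?thesis
    by (simp only: dvd_minus_iff dvd_minus_mod)
qed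

lemma dvd_diff_iff_progression:
  assumes "n \<ge> 1" "u < int n" "0 \<le> x"
  shows "int n dvd x - u \<longleftrightarrow> (\<exists>j::nat. x = u + int j * int n)"
proof
  assume "int n dvd x - u"
  then obtain t where t: "x - u = int n * t" by (auto elim: dvdE)
  have "t \<ge> 0"
  proof (rule ccontr)
    assume "\<not> t \<ge> 0"
    then have "int n * t \<le> int n * (-1)"
      using assms(1) by (intro mult_left_mono) auto
    then show False using t assms by simp
  qed
  then show "\<exists>j::nat. x = u + int j * int n"
    using t by (intro exI[of _ "nat t"]) (simp add: algebra_simps)
qed auto

lemma multinom_mul_prod_fact_preimage:
  assumes inj: "inj e" and preimage: "\<And>x. x \<in># A \<Longrightarrow> f x = v \<longleftrightarrow> (\<exists>j. x = e j)"
  shows "multinom (count (image_mset f A) v) (\<lambda>j. count A (e j)) *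
           (\<Prod>x\<in>{x\<in>set_mset A. f x = v}. fact (count A x)) = fact (count (image_mset f A) v)"
proof -
  define Av where "Av = filter_mset (\<lambda>x. f x = v) A"
  define T where "T = {x\<in>set_mset A. f x = v}"
  have size_Av: "size Av = count (image_mset f A) v"
    by (simp add: count_conv_size_mset filter_mset_image_mset Av_def)
  have prod_Av: "(\<Prod>x\<in>set_mset Av. fact (count Av x) :: nat) = (\<Prod>x\<in>T. fact (count A x))"
    by (rule prod.cong) (auto simp: Av_def T_def)
  have "bij_betw e {j. count A (e j) \<noteq> 0} T"
  proof (rule bij_betw_imageI)
    show "inj_on e {j. count A (e j) \<noteq> 0}"
      using inj by (rule inj_on_subset) simp
    show "e ` {j. count A (e j) \<noteq> 0} = T"
      using preimage by (auto simp: T_def)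
  qed
  then have "(\<Prod>j\<in>{j. count A (e j) \<noteq> 0}. fact (count A (e j)) :: nat) = (\<Prod>x\<in>T. fact (count A x))"
    by (rule prod.reindex_bij_betw)
  moreover have "(\<Prod>x\<in>T. fact (count A x) :: nat) dvd fact (count (image_mset f A) v)"
    using card_permutations_of_multiset(2)[of Av] unfolding prod_Av size_Av by simp
  ultimately show ?thesis
    unfolding multinom_def T_def[symmetric] by simp
qed

lemma prod_atLeast1_atMost_int_split:
  assumes "n \<ge> 1"
  shows "(\<Prod>v\<in>{1..int n}. g v) = g (int n) * (\<Prod>i\<in>{1..n-1}. g (int i))"
proof -
  have "(\<Prod>v\<in>{1..int n}. g v) = (\<Prod>i\<in>{1..n}. g (int i))"
    using prod.reindex[of int "{1..n}" g] by (simp add: image_int_atLeastAtMost)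
  also have "{1..n} = insert n {1..n-1}"
    using assms by auto
  finally show ?thesis
    using assms by simp
qed

lemma residue_eq_iff_progression:
  assumes "n \<ge> 1" "0 \<le> x" "1 \<le> i" "i < n"
  shows "residue n x = int i \<longleftrightarrow> (\<exists>j::nat. x = int i + int j * int n)"
  using assms by (simp add: residue_eq_iff_dvd dvd_diff_iff_progression)

lemma residue_eq_modulus_iff_progression:
  assumes "n \<ge> 1" "0 \<le> x"
  shows "residue n x = int n \<longleftrightarrow> (\<exists>j::nat. x = int j * int n)"
proof -
  have "residue n x = int n \<longleftrightarrow> int n dvd x - int n"
    using assms by (simp add: residue_eq_iff_dvd)
  also have "\<dots> \<longleftrightarrow> int n dvd x"
    using dvd_diff_left_iff[OF dvd_refl] .
  also have "\<dots> \<longleftrightarrow> (\<exists>j::nat. x = int j * int n)"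
    using dvd_diff_iff_progression[of n 0 x] assms by simp
  finally show ?thesis .
qed

lemma multinoms_residues_mul_prod_fact:
  fixes A :: "int multiset"
  assumes n: "n \<ge> 1" and nonneg: "\<forall>x\<in>#A. 0 \<le> x"
  defines "B \<equiv> image_mset (residue n) A"
  shows "multinom (count B (int n)) (\<lambda>j. count A (int j * int n)) *
     (\<Prod>i\<in>{1..n-1}. multinom (count B (int i)) (\<lambda>j. count A (int i + int j * int n))) *
     (\<Prod>x\<in>set_mset A. fact (count A x)) = (\<Prod>y\<in>set_mset B. fact (count B y))"
proof -
  define h where "h v = (\<Prod>x\<in>{x\<in>set_mset A. residue n x = v}. fact (count A x) :: nat)" for v
  have "(\<Prod>x\<in>set_mset A. fact (count A x)) = (\<Prod>v\<in>{1..int n}. h v)"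
    unfolding h_def by (rule prod.group[symmetric]) (use residue_in_range[OF n] in auto)
  then have prod_A: "(\<Prod>x\<in>set_mset A. fact (count A x)) = h (int n) * (\<Prod>i\<in>{1..n-1}. h (int i))"
    using prod_atLeast1_atMost_int_split[OF n, of h] by simp
  have "(\<Prod>y\<in>set_mset B. fact (count B y) :: nat) = (\<Prod>v\<in>{1..int n}. fact (count B v))"
  proof (rule prod.mono_neutral_left)
    show "set_mset B \<subseteq> {1..int n}"
      using residue_in_range[OF n] by (auto simp: B_def)
  qed (auto simp: not_in_iff)
  then have prod_B: "(\<Prod>y\<in>set_mset B. fact (count B y) :: nat) =
      fact (count B (int n)) * (\<Prod>i\<in>{1..n-1}. fact (count B (int i)))"
    using prod_atLeast1_atMost_int_split[OF n, of "\<lambda>v. fact (count B v)"] by simp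
  have top: "multinom (count B (int n)) (\<lambda>j. count A (int j * int n)) * h (int n) = fact (count B (int n))"
    unfolding B_def h_def
    using n nonneg residue_eq_modulus_iff_progression[OF n]
    by (intro multinom_mul_prod_fact_preimage) (auto intro!: injI)
  have mid: "multinom (count B (int i)) (\<lambda>j. count A (int i + int j * int n)) * h (int i) = fact (count B (int i))"
    if "i \<in> {1..n-1}" for i
    unfolding B_def h_def
    using that n nonneg residue_eq_iff_progression[OF n]
    by (intro multinom_mul_prod_fact_preimage) (auto intro!: injI)
  have "multinom (count B (int n)) (\<lambda>j. count A (int j * int n)) *
      (\<Prod>i\<in>{1..n-1}. multinom (count B (int i)) (\<lambda>j. count A (int i + int j * int n))) *
      (h (int n) * (\<Prod>i\<in>{1..n-1}. h (int i)))
    = (multinom (count B (int n)) (\<lambda>j. count A (int j * int n)) * h (int n)) *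
      (\<Prod>i\<in>{1..n-1}. multinom (count B (int i)) (\<lambda>j. count A (int i + int j * int n)) * h (int i))"
    by (simp add: prod.distrib mult_ac)
  also have "\<dots> = fact (count B (int n)) * (\<Prod>i\<in>{1..n-1}. fact (count B (int i)))"
    using top mid by simp
  finally show ?thesis
    unfolding prod_A prod_B .
qed

lemma card_map_fibre_residue:
  fixes A :: "int multiset"
  assumes n: "n \<ge> 1" and nonneg: "\<forall>x\<in>#A. 0 \<le> x"
    and c0: "c0 \<in> permutations_of_multiset (image_mset (residue n) A)"
  defines "B \<equiv> image_mset (residue n) A"
  shows "card (map_fibre (residue n) A c0) =
     multinom (count B (int n)) (\<lambda>j. count A (int j * int n)) *
     (\<Prod>i\<in>{1..n-1}. multinom (count B (int i)) (\<lambda>j. count A (int i + int j * int n)))"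
proof -
  have "card (map_fibre (residue n) A c0) * (\<Prod>x\<in>set_mset A. fact (count A x)) =
    multinom (count B (int n)) (\<lambda>j. count A (int j * int n)) *
     (\<Prod>i\<in>{1..n-1}. multinom (count B (int i)) (\<lambda>j. count A (int i + int j * int n))) *
     (\<Prod>x\<in>set_mset A. fact (count A x))"
    using card_map_fibre_mul_prod_fact[OF c0] multinoms_residues_mul_prod_fact[OF n nonneg]
    unfolding B_def by simp
  moreover have "(\<Prod>x\<in>set_mset A. fact (count A x) :: nat) \<noteq> 0"
    by (simp add: prod_pos)
  ultimately show ?thesis
    by (rule mult_right_cancel[THEN iffD1, rotated])
qed

section \<open>The affine orbit\<close>

lemma sigma_mod:
  "sigma k i m mod int k = (if m mod int k = int i mod int k then (int i + 1) mod int k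
      else if m mod int k = (int i + 1) mod int k then int i mod int k else m mod int k)"
proof (cases "m mod int k = int i mod int k")
  case True
  then have "(m + 1) mod int k = (int i + 1) mod int k" by (rule mod_add_cong) simp
  then show ?thesis using True by (simp add: sigma_def)
next
  case False
  show ?thesis
  proof (cases "m mod int k = (int i + 1) mod int k")
    case True
    then have "(m - 1) mod int k = (int i + 1 - 1) mod int k" by (rule mod_diff_cong) simp
    then show ?thesis using True False by (simp add: sigma_def)
  qed (use False in \<open>simp add: sigma_def\<close>)
qed

lemma sigma_mod_cancel:
  "sigma k i a mod int k = sigma k i b mod int k \<Longrightarrow> a mod int k = b mod int k"
  unfolding sigma_mod by (auto split: if_splits)

lemma affS_mod_cancel:
  assumes "w \<in> affS k" "w a mod int k = w b mod int k"
  shows "a mod int k = b mod int k"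
  using assms
proof (induction arbitrary: a b rule: affS.induct)
  case affS_id then show ?case by simp
next
  case (affS_tau w)
  have "w (a - 1) mod int k = w (b - 1) mod int k"
    using affS_tau.prems by (simp add: tau_def)
  then have "(a - 1) mod int k = (b - 1) mod int k"
    by (rule affS_tau.IH)
  then show ?case by (simp add: mod_eq_dvd_iff)
next
  case (affS_tau_inv w)
  have "w (a + 1) mod int k = w (b + 1) mod int k"
    using affS_tau_inv.prems by (simp add: tau_inv_def)
  then have "(a + 1) mod int k = (b + 1) mod int k"
    by (rule affS_tau_inv.IH)
  then show ?case by (simp add: mod_eq_dvd_iff)
next
  case (affS_sigma w i)
  have "w (sigma k i a) mod int k = w (sigma k i b) mod int k"
    using affS_sigma.prems by simp
  then have "sigma k i a mod int k = sigma k i b mod int k"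
    by (rule affS_sigma.IH)
  then show ?case by (rule sigma_mod_cancel)
qed

definition slot :: "nat \<Rightarrow> int \<Rightarrow> nat" where
  "slot k m = nat ((m - 1) mod int k + 1)"

lemma ext_eq_slot: "ext k n \<nu> m = \<nu> (slot k m) - int n * ((m - 1) div int k)"
  by (simp add: ext_def slot_def)

lemma slot_in_range:
  assumes "k \<ge> 1"
  shows "slot k m \<in> {1..k}"
proof -
  have "0 \<le> (m - 1) mod int k" "(m - 1) mod int k < int k"
    using assms by simp_all
  then show ?thesis
    by (simp add: slot_def nat_le_iff)
qed

lemma slot_eq_iff:
  assumes "k \<ge> 1"
  shows "slot k a = slot k b \<longleftrightarrow> a mod int k = b mod int k"
proof -
  have "0 \<le> (a - 1) mod int k" "0 \<le> (b - 1) mod int k"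
    using assms by simp_all
  then have "slot k a = slot k b \<longleftrightarrow> (a - 1) mod int k = (b - 1) mod int k"
    by (simp add: slot_def eq_nat_nat_iff)
  also have "\<dots> \<longleftrightarrow> a mod int k = b mod int k"
    by (simp add: mod_eq_dvd_iff)
  finally show ?thesis .
qed

lemma slot_of_nat: "i \<in> {1..k} \<Longrightarrow> slot k (int i) = i"
  by (simp add: slot_def)

lemma bij_betw_slot_affS:
  assumes k: "k \<ge> 1" and w: "w \<in> affS k"
  shows "bij_betw (\<lambda>i. slot k (w (int i))) {1..k} {1..k}"
proof -
  have "inj_on (\<lambda>i. slot k (w (int i))) {1..k}"
  proof (rule inj_onI)
    fix i j assume ij: "i \<in> {1..k}" "j \<in> {1..k}" "slot k (w (int i)) = slot k (w (int j))"
    then have "w (int i) mod int k = w (int j) mod int k"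
      by (simp add: slot_eq_iff[OF k])
    then have "int i mod int k = int j mod int k"
      by (rule affS_mod_cancel[OF w])
    then have "slot k (int i) = slot k (int j)"
      by (simp add: slot_eq_iff[OF k])
    then show "i = j"
      using ij by (simp add: slot_of_nat)
  qed
  moreover have "(\<lambda>i. slot k (w (int i))) ` {1..k} \<subseteq> {1..k}"
    using slot_in_range[OF k] by blast
  ultimately show ?thesis
    by (simp add: bij_betw_def endo_inj_surj)
qed

lemma entries_eq_residues_of_affOrbit:
  assumes k: "k \<ge> 1" and n: "n \<ge> 1" and A: "inA k n \<nu>c" and O: "ext k n \<nu>c \<in> affOrbit k n \<nu>"
  shows "entries k \<nu>c = image_mset (residue n) (entries k \<nu>)"
proof -
  obtain w where w: "w \<in> affS k" and e: "ext k n \<nu>c = ext k n \<nu> \<circ> w"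
    using O by (auto simp: affOrbit_def)
  define \<pi> where "\<pi> i = slot k (w (int i))" for i
  have \<nu>c_eq: "\<nu>c i = residue n (\<nu> (\<pi> i))" if i: "i \<in> {1..k}" for i
  proof -
    have "\<nu>c i = ext k n \<nu>c (int i)"
      using i by (simp add: ext_eq_slot slot_of_nat)
    also have "\<dots> = \<nu> (\<pi> i) - int n * ((w (int i) - 1) div int k)"
      using e by (simp add: ext_eq_slot \<pi>_def)
    finally have "\<nu> (\<pi> i) - \<nu>c i = int n * ((w (int i) - 1) div int k)"
      by simp
    then have "int n dvd \<nu> (\<pi> i) - \<nu>c i"
      by (rule dvdI)
    moreover have "0 < \<nu>c i \<and> \<nu>c i \<le> int n"
      using A i unfolding inA_def by blast
    ultimately show ?thesis
      using residue_eq_iff_dvd[OF n, of "\<nu>c i" "\<nu> (\<pi> i)"] by simp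
  qed
  have perm: "image_mset \<pi> (mset_set {1..k}) = mset_set {1..k}"
    using bij_betw_slot_affS[OF k w] unfolding \<pi>_def[abs_def]
    by (simp add: bij_betw_def image_mset_mset_set)
  have "image_mset (residue n) (entries k \<nu>) =
      image_mset (residue n) (image_mset \<nu> (image_mset \<pi> (mset_set {1..k})))"
    unfolding entries_def perm ..
  also have "\<dots> = image_mset (\<lambda>i. residue n (\<nu> (\<pi> i))) (mset_set {1..k})"
    by (simp add: image_mset.compositionality o_def)
  also have "\<dots> = entries k \<nu>c"
    unfolding entries_def by (rule image_mset_cong) (simp add: \<nu>c_eq)
  finally show ?thesis ..
qed

section \<open>Reducing rearrangements modulo n\<close>

lemma mcount_eq_count_entries: "mcount k j \<nu> = count (entries k \<nu>) j"
  by (simp add: mcount_def entries_def count_image_mset_eq_card_vimage)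

lemma length_permutations_of_entries:
  assumes "b \<in> permutations_of_multiset (entries k \<nu>)"
  shows "length b = k"
proof -
  have "size (mset b) = size (entries k \<nu>)"
    using assms by (simp add: permutations_of_multisetD)
  then show ?thesis
    by (simp add: entries_def)
qed

lemma congruent_sum_map_residue_iff:
  assumes "length b = k"
  shows "congruent_sum k n la a (map (residue n) b) \<longleftrightarrow> congruent_sum k n la a b"
proof -
  have "int n dvd a ! i + residue n x - la (Suc i) \<longleftrightarrow> int n dvd a ! i + x - la (Suc i)" for i x
  proof -
    have "a ! i + residue n x - la (Suc i) = (a ! i + x - la (Suc i)) + (residue n x - x)"
      by simp
    then show ?thesis
      by (simp only: dvd_add_left_iff[OF dvd_residue_diff])
  qed
  then show ?thesis
    using assms by (simp add: congruent_sum_def)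
qed

lemma Ncoef_eq_mul_card_map_fibre:
  assumes entries: "entries k \<nu>c = image_mset (residue n) (entries k \<nu>)"
    and c0: "c0 \<in> permutations_of_multiset (entries k \<nu>c)"
  shows "Ncoef k n la \<mu> \<nu> = Ncoef k n la \<mu> \<nu>c * card (map_fibre (residue n) (entries k \<nu>) c0)"
proof -
  have "card {b \<in> permutations_of_multiset (entries k \<nu>). congruent_sum k n la a b} =
      card {c \<in> permutations_of_multiset (entries k \<nu>c). congruent_sum k n la a c} *
      card (map_fibre (residue n) (entries k \<nu>) c0)" for a
    unfolding entries
    by (rule card_filter_permutations_of_multiset_through_map[OF c0[unfolded entries]])
      (simp add: congruent_sum_map_residue_iff length_permutations_of_entries)
  then show ?thesis
    by (simp add: Ncoef_eq_card_congruent_pairs card_pairs_eq_sum sum_distrib_right)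
qed

theorem mainTheorem10:
  fixes k n :: nat and lam mu nu nuc :: "nat \<Rightarrow> int"
  assumes "1 \<le> k" and "1 \<le> n"
    and "inA k n lam" and "inA k n mu" and "inP k nu"
    and "inA k n nuc" and "ext k n nuc \<in> affOrbit k n nu"
  shows "Ncoef k n lam mu nu =
     Ncoef k n lam mu nuc
     * multinom (mcount k (int n) nuc) (\<lambda>j. mcount k (int j * int n) nu)
     * (\<Prod>i\<in>{1..n-1}. multinom (mcount k (int i) nuc) (\<lambda>j. mcount k (int i + int j * int n) nu))"
proof -
  have entries: "entries k nuc = image_mset (residue n) (entries k nu)"
    using assms by (intro entries_eq_residues_of_affOrbit) auto
  obtain c0 where c0: "c0 \<in> permutations_of_multiset (entries k nuc)"
    using permutations_of_multiset_not_empty by blast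
  have nonneg: "\<forall>x\<in>#entries k nu. 0 \<le> x"
    using \<open>inP k nu\<close> by (auto simp: entries_def inP_def)
  have "Ncoef k n lam mu nu = Ncoef k n lam mu nuc * card (map_fibre (residue n) (entries k nu) c0)"
    using entries c0 by (rule Ncoef_eq_mul_card_map_fibre)
  also have "card (map_fibre (residue n) (entries k nu) c0) =
      multinom (mcount k (int n) nuc) (\<lambda>j. mcount k (int j * int n) nu) *
      (\<Prod>i\<in>{1..n-1}. multinom (mcount k (int i) nuc) (\<lambda>j. mcount k (int i + int j * int n) nu))"
    using card_map_fibre_residue[OF \<open>1 \<le> n\<close> nonneg c0[unfolded entries]]
    unfolding mcount_eq_count_entries entries .
  finally show ?thesis
    by (simp only: mult.assoc)
qed

end
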